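(* For every $n\ge1$, $D(\alpha).Q_n(\alpha)=(\alpha^2n^2-n\alpha)Q_n(\alpha)$.
   Context: $F=\mathbb{Q}(\alpha)$, $\Lambda_F=F[p_1,p_2,\dots]$ with $p_n$ the power sums. For a partition $\lambda$ with $m_i$ parts equal to $i$, $l(\lambda)$ is its number of parts, $z_\lambda=\prod_i i^{m_i}m_i!$, $p_\lambda=\prod p_{\lambda_i}$. $Q_n(\alpha)=\sum_{\lambda\vdash n}\alpha^{-l(\lambda)}z_\lambda^{-1}p_\lambda$. The operator $$D(\alpha)=\sum_{i,j\ge1}(i+j)\alpha\,p_ip_j\frac{\partial}{\partial p_{i+j}}+\sum_{i,j\ge1}ij\alpha^2p_{i+j}\frac{\partial^2}{\partial p_i\partial p_j}+\alpha(\alpha-1)\sum_{k\ge1}k^2p_k\frac{\partial}{\partial p_k}.$$ *)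

theory Defs
  imports Main "HOL-Library.Multiset" "HOL-Library.Groups_Big_Fun"
    "HOL-Computational_Algebra.Polynomial" "HOL-Computational_Algebra.Fraction_Field"
begin

text \<open>The field F = Q(alpha): rational functions over Q in an indeterminate alpha.\<close>
type_synonym F = "rat poly fract"

definition alpha :: F where
  "alpha = Fract [:0, 1:] 1"

text \<open>An element of Lambda_F = F[p_1,p_2,...] is represented by its coefficient function
  on the monomial basis: a monomial p_lambda = prod p_(lambda_i) is indexed by the multiset
  lambda of its (positive) indices.  Elements of Lambda_F have finitely supported coefficient
  functions; the operators below are defined on arbitrary coefficient functions.\<close>
type_synonym sym = "nat multiset \<Rightarrow> F"

definition mulp :: "nat \<Rightarrow> sym \<Rightarrow> sym" where
  "mulp i f = (\<lambda>\<mu>. if i \<in># \<mu> then f (\<mu> - {#i#}) else 0)"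

definition dp :: "nat \<Rightarrow> sym \<Rightarrow> sym" where
  "dp k f = (\<lambda>\<mu>. of_nat (count \<mu> k + 1) * f (\<mu> + {#k#}))"

text \<open>The operator D(alpha); the formally infinite sums over i,j,k \<ge> 1 have, at each
  coefficient, only finitely many nonzero terms, and are taken as finite-support sums.\<close>
definition D_op :: "sym \<Rightarrow> sym" where
  "D_op f = (\<lambda>\<mu>.
      (\<Sum>(i,j). if 1 \<le> i \<and> 1 \<le> j then
          of_nat (i + j) * alpha * mulp i (mulp j (dp (i + j) f)) \<mu> else 0)
    + (\<Sum>(i,j). if 1 \<le> i \<and> 1 \<le> j then
          of_nat (i * j) * alpha ^ 2 * mulp (i + j) (dp i (dp j f)) \<mu> else 0)
    + alpha * (alpha - 1) * (\<Sum>k. if 1 \<le> k then of_nat (k ^ 2) * mulp k (dp k f) \<mu> else 0))"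

definition is_partition :: "nat multiset \<Rightarrow> nat \<Rightarrow> bool" where
  "is_partition lam n \<longleftrightarrow> 0 \<notin># lam \<and> sum_mset lam = n"

definition z_part :: "nat multiset \<Rightarrow> nat" where
  "z_part lam = (\<Prod>i\<in>set_mset lam. i ^ count lam i * fact (count lam i))"

definition Q :: "nat \<Rightarrow> sym" where
  "Q n = (\<lambda>lam. if is_partition lam n
              then inverse (alpha ^ size lam) * inverse (of_nat (z_part lam)) else 0)"

end

theory Submission
  imports Defs
begin

text \<open>Write \<open>m\<^sub>k\<close> for the multiplicity of \<open>k\<close> in a partition \<open>\<mu>\<close> and \<open>S = \<Sum>\<^sub>k k\<^sup>2 m\<^sub>k\<close>.
  Each of the three terms of \<open>D(\<alpha>)\<close> is diagonal on \<open>Q\<^sub>n(\<alpha>)\<close>, because removing a part \<open>k\<close>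
  from \<open>\<lambda>\<close> multiplies the coefficient \<open>\<alpha>\<^sup>-\<^sup>l\<^sup>(\<^sup>\<lambda>\<^sup>) z\<^sub>\<lambda>\<^sup>-\<^sup>1\<close> by \<open>\<alpha> k m\<^sub>k(\<lambda>)\<close>.
  At \<open>p\<^sub>\<mu>\<close> the first term thus multiplies the coefficient by \<open>\<alpha>\<^sup>2 i j m\<^sub>i (m\<^sub>j - \<delta>\<^sub>i\<^sub>j)\<close>, the
  second by \<open>\<alpha> (i + j) m\<^sub>i\<^sub>+\<^sub>j\<close> and the third by \<open>\<alpha>(\<alpha> - 1) k\<^sup>2 m\<^sub>k\<close>. Summed over \<open>i, j, k\<close> these
  factors are \<open>\<alpha>\<^sup>2 (n\<^sup>2 - S)\<close>, \<open>\<alpha> (S - n)\<close> and \<open>\<alpha>(\<alpha> - 1) S\<close>, whose total \<open>\<alpha>\<^sup>2 n\<^sup>2 - \<alpha> n\<close> does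
  not depend on \<open>\<mu>\<close>.\<close>

lemma sum_mset_subtractf:
  fixes f g :: "'a \<Rightarrow> 'b::ab_group_add"
  shows "(\<Sum>x\<in>#M. f x - g x) = (\<Sum>x\<in>#M. f x) - (\<Sum>x\<in>#M. g x)"
  by (induction M) (simp_all add: algebra_simps)

lemma sum_set_mset_count_mult:
  fixes f :: "'a \<Rightarrow> 'b::comm_semiring_1"
  shows "(\<Sum>x\<in>set_mset M. of_nat (count M x) * f x) = (\<Sum>x\<in>#M. f x)"
proof (induction M)
  case empty
  then show ?case by simp
next
  case (add y M)
  have "(\<Sum>x\<in>set_mset (add_mset y M). of_nat (count (add_mset y M) x) * f x)
      = (\<Sum>x\<in>insert y (set_mset M). of_nat (count M x) * f x + (if x = y then f x else 0))"
    by (rule sum.cong) (auto simp: algebra_simps)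
  also have "\<dots> = (\<Sum>x\<in>insert y (set_mset M). of_nat (count M x) * f x) + f y"
    by (simp add: sum.distrib)
  also have "(\<Sum>x\<in>insert y (set_mset M). of_nat (count M x) * f x)
      = (\<Sum>x\<in>set_mset M. of_nat (count M x) * f x)"
    by (cases "y \<in># M") (auto simp: insert_absorb not_in_iff)
  finally show ?case
    using add by (simp add: add.commute)
qed

lemma Sum_any_count_mult:
  fixes f :: "'a \<Rightarrow> 'b::comm_semiring_1"
  shows "(\<Sum>x. of_nat (count M x) * f x) = (\<Sum>x\<in>#M. f x)"
proof -
  have "{x. of_nat (count M x) * f x \<noteq> 0} \<subseteq> set_mset M"
    by (auto intro: ccontr simp: not_in_iff)
  then show ?thesis
    by (simp add: Sum_any.expand_superset [of "set_mset M"] sum_set_mset_count_mult)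
qed

lemma Sum_any_mult_left:
  fixes f :: "'a \<Rightarrow> 'b::{semiring_0, semiring_no_zero_divisors}"
  shows "(\<Sum>x. c * f x) = c * Sum_any f"
proof (cases "c = 0")
  case False
  then have "{x. c * f x \<noteq> 0} = {x. f x \<noteq> 0}"
    by auto
  then show ?thesis
    by (cases "finite {x. f x \<noteq> 0}")
      (simp_all add: Sum_any_right_distrib Sum_any.expand_set sum_distrib_left)
qed simp

lemma Sum_any_two_compositions:
  fixes g :: "nat \<Rightarrow> 'a::comm_semiring_1"
  assumes fin: "finite {s. g s \<noteq> 0}"
  shows "(\<Sum>(i, j). if 1 \<le> i \<and> 1 \<le> j then g (i + j) else 0) = (\<Sum>s. of_nat (s - 1) * g s)"
proof -
  define A where "A = {s. g s \<noteq> 0}"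
  define C where "C = (SIGMA s:A. {1..<s})"
  define cut where "cut = (\<lambda>(s, i). (i, s - i :: nat))"
  let ?f = "\<lambda>(i, j). if 1 \<le> i \<and> 1 \<le> j then g (i + j) else 0"
  have "finite C"
    using fin by (simp add: A_def C_def)
  have "inj_on cut C"
    by (auto simp: C_def cut_def inj_on_def)
  have "{p. ?f p \<noteq> 0} \<subseteq> cut ` C"
  proof
    fix p assume "p \<in> {p. ?f p \<noteq> 0}"
    then obtain i j where "p = (i, j)" "1 \<le> i" "1 \<le> j" "i + j \<in> A"
      by (cases p) (auto simp: A_def split: if_splits)
    then have "(i + j, i) \<in> C" "p = cut (i + j, i)"
      by (auto simp: C_def cut_def)
    then show "p \<in> cut ` C"
      by blast
  qed
  then have "(\<Sum>p. ?f p) = sum (?f \<circ> cut) C"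
    using \<open>finite C\<close> \<open>inj_on cut C\<close>
    by (simp add: Sum_any.expand_superset [of "cut ` C"] sum.reindex)
  also have "\<dots> = (\<Sum>s\<in>A. \<Sum>i\<in>{1..<s}. (?f \<circ> cut) (s, i))"
    unfolding C_def using fin by (subst sum.Sigma) (auto simp: A_def)
  also have "\<dots> = (\<Sum>s\<in>A. \<Sum>i\<in>{1..<s}. g s)"
    by (intro sum.cong) (auto simp: cut_def)
  also have "\<dots> = (\<Sum>s. of_nat (s - 1) * g s)"
    using fin by (subst Sum_any.expand_superset [of A]) (auto simp: A_def)
  finally show ?thesis .
qed

lemma Sum_any_distinct_part_pairs:
  "(\<Sum>(i, j). of_nat (i * j * count M i * (count M j - of_bool (i = j))) :: 'a::comm_ring_1)
     = of_nat (\<Sum>\<^sub># M) ^ 2 - of_nat (\<Sum>x\<in>#M. x ^ 2)"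
proof -
  define A where "A = set_mset M"
  define c where "c x = (of_nat (count M x) :: 'a)" for x
  have weight: "(of_nat (i * j * count M i * (count M j - of_bool (i = j))) :: 'a)
      = (c i * of_nat i) * (c j * of_nat j) - (if i = j then c i * of_nat (i ^ 2) else 0)" for i j
    by (cases "count M j") (auto simp: c_def algebra_simps power2_eq_square)
  have "(\<Sum>(i, j). of_nat (i * j * count M i * (count M j - of_bool (i = j))) :: 'a)
      = (\<Sum>(i, j)\<in>A \<times> A. of_nat (i * j * count M i * (count M j - of_bool (i = j))))"
    by (rule Sum_any.expand_superset) (auto simp: A_def intro: ccontr simp: not_in_iff)
  also have "\<dots> = (\<Sum>i\<in>A. \<Sum>j\<in>A. of_nat (i * j * count M i * (count M j - of_bool (i = j))))"
    by (rule sum.cartesian_product [symmetric])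
  also have "\<dots> = (\<Sum>i\<in>A. \<Sum>j\<in>A.
      (c i * of_nat i) * (c j * of_nat j) - (if i = j then c i * of_nat (i ^ 2) else 0))"
    by (simp only: weight)
  also have "\<dots> = (\<Sum>i\<in>A. c i * of_nat i) ^ 2 - (\<Sum>i\<in>A. c i * of_nat (i ^ 2))"
    by (simp add: sum_subtractf sum_product power2_eq_square A_def)
  finally show ?thesis
    by (simp add: A_def c_def sum_set_mset_count_mult image_mset.compositionality o_def)
qed

lemma Sum_any_two_part_splits:
  "(\<Sum>(i, j). if 1 \<le> i \<and> 1 \<le> j then of_nat ((i + j) * count M (i + j)) else 0 :: 'a::comm_ring_1)
     = of_nat (\<Sum>x\<in>#M. x ^ 2) - of_nat (\<Sum>\<^sub># M)"
proof -
  have "finite {s. (of_nat (s * count M s) :: 'a) \<noteq> 0}"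
    by (rule finite_subset [of _ "set_mset M"]) (auto intro: ccontr simp: not_in_iff)
  then have "(\<Sum>(i, j). if 1 \<le> i \<and> 1 \<le> j then of_nat ((i + j) * count M (i + j)) else 0 :: 'a)
      = (\<Sum>s. of_nat (s - 1) * of_nat (s * count M s))"
    by (rule Sum_any_two_compositions)
  also have "\<dots> = (\<Sum>s. of_nat (count M s) * (of_nat (s ^ 2) - of_nat s))"
  proof (rule Sum_any.cong)
    show "(of_nat (s - 1) * of_nat (s * count M s) :: 'a) = of_nat (count M s) * (of_nat (s ^ 2) - of_nat s)" for s
      by (cases s) (simp_all add: algebra_simps power2_eq_square)
  qed
  also have "\<dots> = (\<Sum>x\<in>#M. of_nat (x ^ 2) - of_nat x)"
    by (rule Sum_any_count_mult)
  finally show ?thesis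
    by (simp add: sum_mset_subtractf image_mset.compositionality o_def)
qed

lemma alpha_neq_zero: "alpha \<noteq> 0"
proof
  assume "alpha = 0"
  then have "Fract [:0, 1:] (1::rat poly) = Fract 0 1"
    by (simp add: alpha_def fract_collapse)
  then show False
    by (simp add: eq_fract)
qed

definition Q_coeff :: "nat multiset \<Rightarrow> F" where
  "Q_coeff lam = inverse (alpha ^ size lam) * inverse (of_nat (z_part lam))"

lemma Q_eq_Q_coeff: "Q n lam = (if is_partition lam n then Q_coeff lam else 0)"
  by (simp add: Q_def Q_coeff_def)

lemma sum_mset_eq_if_Q_neq_zero: "Q n lam \<noteq> 0 \<Longrightarrow> \<Sum>\<^sub># lam = n"
  by (simp add: Q_def is_partition_def split: if_splits)

lemma is_partition_merge_parts:
  "1 \<le> i \<Longrightarrow> 1 \<le> j \<Longrightarrow>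
    is_partition (add_mset i (add_mset j lam)) n = is_partition (add_mset (i + j) lam) n"
  by (auto simp: is_partition_def)

lemma z_part_insert:
  "z_part lam = (\<Prod>i\<in>insert k (set_mset lam). i ^ count lam i * fact (count lam i))"
  by (cases "k \<in># lam") (simp_all add: z_part_def insert_absorb not_in_iff)

lemma z_part_add_mset: "z_part (add_mset k lam) = z_part lam * k * (count lam k + 1)"
proof -
  let ?rest = "\<Prod>i\<in>set_mset lam - {k}. i ^ count lam i * fact (count lam i)"
  have "z_part (add_mset k lam) = k ^ (count lam k + 1) * fact (count lam k + 1) * ?rest"
    unfolding z_part_def by (auto simp: prod.insert_remove intro!: prod.cong)
  moreover have "z_part lam = k ^ count lam k * fact (count lam k) * ?rest"
    by (subst z_part_insert [of _ k]) (simp add: prod.insert_remove)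
  ultimately show ?thesis
    by (simp add: algebra_simps)
qed

lemma Q_coeff_add_mset:
  assumes "1 \<le> k"
  shows "Q_coeff lam = Q_coeff (add_mset k lam) * (alpha * of_nat k * of_nat (count lam k + 1))"
proof -
  let ?c = "alpha * of_nat k * of_nat (count lam k + 1)"
  have "Q_coeff (add_mset k lam) = Q_coeff lam * inverse ?c"
    unfolding Q_coeff_def z_part_add_mset size_add_mset power_Suc of_nat_mult inverse_mult_distrib
    by (simp only: mult_ac)
  moreover have "?c \<noteq> 0"
    using alpha_neq_zero assms by (simp del: of_nat_Suc)
  ultimately show ?thesis
    by (metis mult.assoc left_inverse mult_1_right)
qed

lemma mulp_dp: "mulp k (dp k f) \<mu> = of_nat (count \<mu> k) * f \<mu>"
proof (cases "k \<in># \<mu>")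
  case True
  then have "add_mset k (\<mu> - {#k#}) = \<mu>" "count (\<mu> - {#k#}) k + 1 = count \<mu> k"
    by (simp_all add: insert_DiffM Suc_leI)
  with True show ?thesis
    by (simp add: mulp_def dp_def del: of_nat_Suc)
next
  case False
  then show ?thesis
    by (simp add: mulp_def count_eq_zero_iff)
qed

lemma mulp_mulp_dp_Q:
  assumes "1 \<le> i" "1 \<le> j"
  shows "of_nat (i + j) * alpha * mulp i (mulp j (dp (i + j) (Q n))) \<mu>
    = alpha ^ 2 * of_nat (i * j * count \<mu> i * (count \<mu> j - of_bool (i = j))) * Q n \<mu>"
proof (cases "i \<in># \<mu> \<and> j \<in># \<mu> - {#i#}")
  case True
  define \<nu> where "\<nu> = \<mu> - {#i#} - {#j#}"
  have \<mu>: "\<mu> = add_mset i (add_mset j \<nu>)"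
    using True unfolding \<nu>_def by (metis insert_DiffM)
  have lhs: "mulp i (mulp j (dp (i + j) (Q n))) \<mu> = of_nat (count \<nu> (i + j) + 1) * Q n (add_mset (i + j) \<nu>)"
    using True by (simp add: mulp_def dp_def \<nu>_def)
  have counts: "count \<mu> i = count (add_mset j \<nu>) i + 1" "count \<mu> j - of_bool (i = j) = count \<nu> j + 1"
    by (simp_all add: \<mu>)
  have "of_nat (i + j) * alpha * (of_nat (count \<nu> (i + j) + 1) * Q_coeff (add_mset (i + j) \<nu>)) = Q_coeff \<nu>"
    using Q_coeff_add_mset [of "i + j" \<nu>] assms by (simp only: ac_simps)
  also have "\<dots> = Q_coeff \<mu> * (alpha * of_nat i * of_nat (count (add_mset j \<nu>) i + 1))
      * (alpha * of_nat j * of_nat (count \<nu> j + 1))"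
    using Q_coeff_add_mset [of j \<nu>] Q_coeff_add_mset [of i "add_mset j \<nu>"] assms
    by (simp only: \<mu>)
  also have "\<dots> = alpha ^ 2 * of_nat (i * j * count \<mu> i * (count \<mu> j - of_bool (i = j))) * Q_coeff \<mu>"
    unfolding counts by (simp only: of_nat_mult power2_eq_square ac_simps)
  finally have coeff: "of_nat (i + j) * alpha * (of_nat (count \<nu> (i + j) + 1) * Q_coeff (add_mset (i + j) \<nu>))
    = alpha ^ 2 * of_nat (i * j * count \<mu> i * (count \<mu> j - of_bool (i = j))) * Q_coeff \<mu>" .
  have partition: "is_partition (add_mset (i + j) \<nu>) n = is_partition \<mu> n"
    using is_partition_merge_parts [OF assms, of \<nu> n] by (simp add: \<mu>)
  show ?thesis
    unfolding lhs Q_eq_Q_coeff partition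
    by (cases "is_partition \<mu> n") (simp_all only: if_True if_False coeff mult_zero_right)
next
  case False
  then have "count \<mu> i * (count \<mu> j - of_bool (i = j)) = 0"
    by (auto simp: not_in_iff)
  moreover have "mulp i (mulp j (dp (i + j) (Q n))) \<mu> = 0"
    using False by (auto simp: mulp_def)
  ultimately show ?thesis
    by simp
qed

lemma mulp_dp_dp_Q:
  assumes "1 \<le> i" "1 \<le> j"
  shows "of_nat (i * j) * alpha ^ 2 * mulp (i + j) (dp i (dp j (Q n))) \<mu>
    = alpha * of_nat ((i + j) * count \<mu> (i + j)) * Q n \<mu>"
proof (cases "i + j \<in># \<mu>")
  case True
  define \<nu> where "\<nu> = \<mu> - {#i + j#}"
  have \<mu>: "\<mu> = add_mset (i + j) \<nu>"
    using True unfolding \<nu>_def by (metis insert_DiffM)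
  have lhs: "mulp (i + j) (dp i (dp j (Q n))) \<mu>
      = of_nat (count \<nu> i + 1) * (of_nat (count (add_mset i \<nu>) j + 1) * Q n (add_mset j (add_mset i \<nu>)))"
    using True by (simp add: mulp_def dp_def \<nu>_def)
  have "of_nat (i * j) * alpha ^ 2 * (of_nat (count \<nu> i + 1) *
      (of_nat (count (add_mset i \<nu>) j + 1) * Q_coeff (add_mset j (add_mset i \<nu>)))) = Q_coeff \<nu>"
    using Q_coeff_add_mset [of i \<nu>] Q_coeff_add_mset [of j "add_mset i \<nu>"] assms
    by (simp only: of_nat_mult power2_eq_square ac_simps)
  also have "\<dots> = Q_coeff \<mu> * (alpha * of_nat (i + j) * of_nat (count \<nu> (i + j) + 1))"
    using Q_coeff_add_mset [of "i + j" \<nu>] assms by (simp only: \<mu>)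
  also have "\<dots> = alpha * of_nat ((i + j) * count \<mu> (i + j)) * Q_coeff \<mu>"
    by (simp add: \<mu> algebra_simps)
  finally have coeff: "of_nat (i * j) * alpha ^ 2 * (of_nat (count \<nu> i + 1) *
      (of_nat (count (add_mset i \<nu>) j + 1) * Q_coeff (add_mset j (add_mset i \<nu>))))
    = alpha * of_nat ((i + j) * count \<mu> (i + j)) * Q_coeff \<mu>" .
  have partition: "is_partition (add_mset j (add_mset i \<nu>)) n = is_partition \<mu> n"
    using is_partition_merge_parts [OF assms(2,1), of \<nu> n] by (simp add: \<mu> add.commute)
  show ?thesis
    unfolding lhs Q_eq_Q_coeff partition
    by (cases "is_partition \<mu> n") (simp_all only: if_True if_False coeff mult_zero_right)
next
  case False
  then show ?thesis
    by (simp add: mulp_def count_eq_zero_iff)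
qed

lemma Sum_any_cut_term_Q:
  "(\<Sum>(i, j). if 1 \<le> i \<and> 1 \<le> j
      then of_nat (i + j) * alpha * mulp i (mulp j (dp (i + j) (Q n))) \<mu> else 0)
    = alpha ^ 2 * Q n \<mu> * (of_nat (\<Sum>\<^sub># \<mu>) ^ 2 - of_nat (\<Sum>x\<in>#\<mu>. x ^ 2))"
proof -
  have "(\<Sum>(i, j). if 1 \<le> i \<and> 1 \<le> j
      then of_nat (i + j) * alpha * mulp i (mulp j (dp (i + j) (Q n))) \<mu> else 0)
    = (\<Sum>p. alpha ^ 2 * Q n \<mu> *
        (case p of (i, j) \<Rightarrow> of_nat (i * j * count \<mu> i * (count \<mu> j - of_bool (i = j)))))"
    (is "Sum_any ?lhs = Sum_any ?rhs")
  proof (rule Sum_any.cong)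
    fix p :: "nat \<times> nat"
    obtain i j where "p = (i, j)"
      by fastforce
    then show "?lhs p = ?rhs p"
      using mulp_mulp_dp_Q [of i j n \<mu>] by (cases "1 \<le> i \<and> 1 \<le> j") (auto simp: mult_ac)
  qed
  then show ?thesis
    by (simp only: Sum_any_mult_left Sum_any_distinct_part_pairs)
qed

lemma Sum_any_join_term_Q:
  "(\<Sum>(i, j). if 1 \<le> i \<and> 1 \<le> j
      then of_nat (i * j) * alpha ^ 2 * mulp (i + j) (dp i (dp j (Q n))) \<mu> else 0)
    = alpha * Q n \<mu> * (of_nat (\<Sum>x\<in>#\<mu>. x ^ 2) - of_nat (\<Sum>\<^sub># \<mu>))"
proof -
  have "(\<Sum>(i, j). if 1 \<le> i \<and> 1 \<le> j
      then of_nat (i * j) * alpha ^ 2 * mulp (i + j) (dp i (dp j (Q n))) \<mu> else 0)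
    = (\<Sum>p. alpha * Q n \<mu> *
        (case p of (i, j) \<Rightarrow> if 1 \<le> i \<and> 1 \<le> j then of_nat ((i + j) * count \<mu> (i + j)) else 0))"
    (is "Sum_any ?lhs = Sum_any ?rhs")
  proof (rule Sum_any.cong)
    fix p :: "nat \<times> nat"
    obtain i j where "p = (i, j)"
      by fastforce
    then show "?lhs p = ?rhs p"
      using mulp_dp_dp_Q [of i j n \<mu>] by (cases "1 \<le> i \<and> 1 \<le> j") (auto simp: mult_ac)
  qed
  then show ?thesis
    by (simp only: Sum_any_mult_left Sum_any_two_part_splits)
qed

lemma Sum_any_degree_term_Q:
  "(\<Sum>k. if 1 \<le> k then of_nat (k ^ 2) * mulp k (dp k (Q n)) \<mu> else 0)
    = Q n \<mu> * of_nat (\<Sum>x\<in>#\<mu>. x ^ 2)"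
proof -
  have "(\<Sum>k. if 1 \<le> k then of_nat (k ^ 2) * mulp k (dp k (Q n)) \<mu> else 0)
    = (\<Sum>k. Q n \<mu> * (of_nat (count \<mu> k) * of_nat (k ^ 2)))"
    by (intro Sum_any.cong) (auto simp: mulp_dp)
  then show ?thesis
    by (simp add: Sum_any_mult_left Sum_any_count_mult image_mset.compositionality o_def)
qed

theorem lemma3p5:
  fixes n :: nat
  assumes "1 \<le> n"
  shows "D_op (Q n) = (\<lambda>\<mu>. (alpha ^ 2 * of_nat n ^ 2 - of_nat n * alpha) * Q n \<mu>)"
proof
  fix \<mu>
  let ?N = "of_nat (\<Sum>\<^sub># \<mu>) :: F" and ?S = "of_nat (\<Sum>x\<in>#\<mu>. x ^ 2) :: F"
  have "D_op (Q n) \<mu>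
      = alpha ^ 2 * Q n \<mu> * (?N ^ 2 - ?S) + alpha * Q n \<mu> * (?S - ?N) + alpha * (alpha - 1) * (Q n \<mu> * ?S)"
    unfolding D_op_def Sum_any_cut_term_Q Sum_any_join_term_Q Sum_any_degree_term_Q ..
  also have "\<dots> = (alpha ^ 2 * of_nat n ^ 2 - of_nat n * alpha) * Q n \<mu>"
  proof (cases "Q n \<mu> = 0")
    case False
    then have "?N = of_nat n"
      by (simp only: sum_mset_eq_if_Q_neq_zero)
    then show ?thesis
      by (simp add: algebra_simps power2_eq_square)
  qed simp
  finally show "D_op (Q n) \<mu> = (alpha ^ 2 * of_nat n ^ 2 - of_nat n * alpha) * Q n \<mu>" .
qed

end
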